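(* Assume the setup described in the context. Then there exists a unique continuous function $f:I\to\mathbb R$ with $f(x_i)=y_i$ for $i=0,\dots,n$ such that for every $i\in N_n$ and every $x\in I_i$, $$f(x)=F_i\big(L_i^{-1}(x),\,f(L_i^{-1}(x))\big).$$ Moreover, setting $A_i=\{(x,f(x)):x\in I_i\}$ for $i\in N_n$, one has $A_i=\bigcup_{j:\,c_{ij}=1}W_i(A_j)$ for every $i\in N_n$ (so $(A_1,\dots,A_n)$ is the invariant set of the recurrent iterated function system with maps $W_1,\dots,W_n$ and connection matrix $C$), and $\bigcup_{i=1}^nA_i$ is the graph of $f$, which interpolates $P$.
   Context: Let $n\ge 2$ and $P=\{(x_i,y_i):i=0,1,\dots,n\}\subset\mathbb R^2$ with $x_0<x_1<\dots<x_n$. Put $I=[x_0,x_n]$, $N_n=\{1,\dots,n\}$ and $I_i=[x_{i-1},x_i]$ for $i\in N_n$. Let $l\ge 2$ and for $k=1,\dots,l$ let $\tilde I_k=[x_{s(k)},x_{e(k)}]$ with $s(k),e(k)\in\{0,\dots,n\}$ and $e(k)-s(k)\ge 2$. Let $\gamma:N_n\to\{1,\dots,l\}$ be a map. For each $i\in N_n$, with $k=\gamma(i)$, let $L_i:\tilde I_k\to I_i$ be a homeomorphism which is a contraction (Lipschitz constant $c_{L_i}<1$) with $L_i(\{x_{s(k)},x_{e(k)}\})=\{x_{i-1},x_i\}$. Let $a:\mathbb R\to\mathbb R$ be Lipschitz with Lipschitz constant $L_a$. For each $i\in N_n$ let $b_i:\tilde I_{\gamma(i)}\to\mathbb R$ be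 Lipschitz, and let $s_i:I_i\to\mathbb R$ be Lipschitz with Lipschitz constant $<1$ and $\sup_{x\in I_i}|s_i(x)|\cdot L_a<1$. Define $F_i:\tilde I_{\gamma(i)}\times\mathbb R\to\mathbb R$ by $F_i(x,y)=s_i(L_i(x))\,a(y)+b_i(x)$, and assume the interpolation condition: for $k=\gamma(i)$, each $\alpha\in\{s(k),e(k)\}$ and the $\beta\in\{i-1,i\}$ with $L_i(x_\alpha)=x_\beta$, one has $F_i(x_\alpha,y_\alpha)=y_\beta$. Define $W_i:\tilde I_{\gamma(i)}\times\mathbb R\to I_i\times\mathbb R$ by $W_i(x,y)=(L_i(x),F_i(x,y))$. The connection matrix $C=(c_{ij})_{i,j=1}^n$ is defined by $c_{ij}=1$ if $I_j\subset\tilde I_{\gamma(i)}$ and $c_{ij}=0$ otherwise. *)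

theory Defs
  imports "HOL-Analysis.Analysis"
begin

definition Fmap :: "(nat \<Rightarrow> real \<Rightarrow> real) \<Rightarrow> (nat \<Rightarrow> real \<Rightarrow> real) \<Rightarrow> (real \<Rightarrow> real)
    \<Rightarrow> (nat \<Rightarrow> real \<Rightarrow> real) \<Rightarrow> nat \<Rightarrow> real \<Rightarrow> real \<Rightarrow> real" where
  "Fmap s L a b i u v = s i (L i u) * a v + b i u"

definition Wmap :: "(nat \<Rightarrow> real \<Rightarrow> real) \<Rightarrow> (nat \<Rightarrow> real \<Rightarrow> real) \<Rightarrow> (real \<Rightarrow> real)
    \<Rightarrow> (nat \<Rightarrow> real \<Rightarrow> real) \<Rightarrow> nat \<Rightarrow> real \<times> real \<Rightarrow> real \<times> real" where
  "Wmap s L a b i p = (L i (fst p), Fmap s L a b i (fst p) (snd p))"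

end

theory Submission
  imports Defs
begin

text \<open>The Read--Bajraktarevi\'c operator sends a continuous interpolant g of the data to the
  function that equals F_i(L_i^{-1} t, g(L_i^{-1} t)) on I_i. The interpolation conditions at
  the endpoints of the L_i make the pieces fit together, so the operator preserves the closed set
  of continuous interpolants, and on it it contracts the supremum distance by the factor
  max_i (sup |s_i|) L_a < 1. Banach's fixed point theorem gives the unique fixed point f.
  Reading the fixed point equation through the homeomorphisms L_i shows that W_i maps the graph
  of f over the domain of L_i, i.e. over the union of the I_j it contains, onto the graph of f
  over I_i.\<close>

lemma homeomorphism_inv_into:
  assumes hom: "homeomorphism S T f g"
  shows "homeomorphism S T f (inv_into S f)"
proof (rule homeomorphism_cong[OF hom refl refl refl])
  fix t assume t: "t \<in> T"
  have "inj_on f S"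
    using homeomorphism_apply1[OF hom] by (rule inj_on_inverseI)
  moreover have "g t \<in> S"
    using homeomorphism_image2[OF hom] t by blast
  ultimately have "inv_into S f (f (g t)) = g t"
    by (rule inv_into_f_f)
  then show "inv_into S f t = g t"
    using homeomorphism_apply2[OF hom t] by simp
qed

definition clamp :: "real \<Rightarrow> real \<Rightarrow> real \<Rightarrow> real" where
  "clamp a b t = max a (min b t)"

lemma clamp_in: "a \<le> b \<Longrightarrow> clamp a b t \<in> {a..b}"
  by (auto simp: clamp_def)

lemma clamp_id: "t \<in> {a..b} \<Longrightarrow> clamp a b t = t"
  by (auto simp: clamp_def)

lemma comp_clamp_bcontfun:
  fixes g :: "real \<Rightarrow> 'a::metric_space"
  assumes ab: "a \<le> b" and g: "continuous_on {a..b} g"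
  shows "g \<circ> clamp a b \<in> bcontfun"
proof -
  have clamp: "range (clamp a b) \<subseteq> {a..b}"
    using clamp_in[OF ab] by blast
  have "continuous_on UNIV (clamp a b)"
    unfolding clamp_def by (intro continuous_intros)
  then have "continuous_on UNIV (g \<circ> clamp a b)"
    using continuous_on_compose[of UNIV "clamp a b" g] continuous_on_subset[OF g clamp] by simp
  moreover have "range (g \<circ> clamp a b) \<subseteq> g ` {a..b}"
    using clamp by auto
  then have "bounded (range (g \<circ> clamp a b))"
    using bounded_subset compact_imp_bounded compact_continuous_image[OF g] by blast
  ultimately show ?thesis
    unfolding bcontfun_def by simp
qed

lemma continuous_on_bcontfun_eval:
  "continuous_on UNIV (\<lambda>G :: 'a::topological_space \<Rightarrow>\<^sub>C 'b::metric_space. apply_bcontfun G t)"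
  by (rule lipschitz_on_continuous_on[of 1]) (auto simp: lipschitz_on_def dist_bounded)

lemma closed_clamped_bcontfun_interpolating:
  "closed {G :: real \<Rightarrow>\<^sub>C 'a::metric_space.
     (\<forall>t. apply_bcontfun G t = apply_bcontfun G (clamp a b t)) \<and> (\<forall>j\<in>C. apply_bcontfun G (z j) = w j)}"
proof -
  have "{G :: real \<Rightarrow>\<^sub>C 'a. (\<forall>t. apply_bcontfun G t = apply_bcontfun G (clamp a b t))
          \<and> (\<forall>j\<in>C. apply_bcontfun G (z j) = w j)}
      = (\<Inter>t. {G. apply_bcontfun G t = apply_bcontfun G (clamp a b t)})
        \<inter> (\<Inter>j\<in>C. {G. apply_bcontfun G (z j) = w j})"
    by auto
  then show ?thesis
    by (simp add: closed_Int closed_INT closed_Collect_eq continuous_on_bcontfun_eval)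
qed

lemma contraction_fixpoint_unique_on_interval:
  fixes \<Phi> :: "(real \<Rightarrow> real) \<Rightarrow> real \<Rightarrow> real" and K :: real
  assumes ab: "a \<le> b" and f: "continuous_on {a..b} f" and g: "continuous_on {a..b} g"
    and f_fixed: "\<forall>t\<in>{a..b}. \<Phi> f t = f t" and g_fixed: "\<forall>t\<in>{a..b}. \<Phi> g t = g t"
    and contraction: "\<And>g h B t. (\<forall>u\<in>{a..b}. \<bar>g u - h u\<bar> \<le> B) \<Longrightarrow> t \<in> {a..b} \<Longrightarrow>
        \<bar>\<Phi> g t - \<Phi> h t\<bar> \<le> K * B"
    and K1: "K < 1"
  shows "\<forall>t\<in>{a..b}. g t = f t"
proof -
  define D where "D = (SUP u\<in>{a..b}. \<bar>g u - f u\<bar>)"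
  have "bdd_above ((\<lambda>u. \<bar>g u - f u\<bar>) ` {a..b})"
    using f g by (intro bounded_imp_bdd_above compact_imp_bounded compact_continuous_image
        continuous_intros compact_Icc)
  then have le_D: "\<forall>u\<in>{a..b}. \<bar>g u - f u\<bar> \<le> D"
    unfolding D_def by (auto intro: cSUP_upper)
  have "\<bar>g u - f u\<bar> \<le> K * D" if "u \<in> {a..b}" for u
    using contraction[OF le_D that] f_fixed g_fixed that by simp
  then have "D \<le> K * D"
    unfolding D_def using ab by (intro cSUP_least) auto
  then have "(1 - K) * D \<le> 0"
    by (simp add: algebra_simps)
  then have "D \<le> 0"
    using K1 by (simp add: mult_le_0_iff)
  then show ?thesis
    using le_D by force
qed

lemma contraction_fixpoint_exists_on_interval:
  fixes \<Phi> :: "(real \<Rightarrow> real) \<Rightarrow> real \<Rightarrow> real" and K :: real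
  assumes ab: "a \<le> b" and nodes: "z ` C \<subseteq> {a..b}"
    and start: "continuous_on {a..b} g0" "\<forall>j\<in>C. g0 (z j) = w j"
    and maps: "\<And>g. continuous_on {a..b} g \<Longrightarrow> \<forall>j\<in>C. g (z j) = w j \<Longrightarrow>
        continuous_on {a..b} (\<Phi> g) \<and> (\<forall>j\<in>C. \<Phi> g (z j) = w j)"
    and contraction: "\<And>g h B t. (\<forall>u\<in>{a..b}. \<bar>g u - h u\<bar> \<le> B) \<Longrightarrow> t \<in> {a..b} \<Longrightarrow>
        \<bar>\<Phi> g t - \<Phi> h t\<bar> \<le> K * B"
    and K1: "K < 1"
  shows "\<exists>f. continuous_on {a..b} f \<and> (\<forall>j\<in>C. f (z j) = w j) \<and> (\<forall>t\<in>{a..b}. \<Phi> f t = f t)"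
proof -
  txt \<open>C([a,b]) is modelled by the bounded continuous functions on the real line that are
    constant outside [a,b], i.e. that factor through the clamping to [a,b].\<close>
  define S :: "(real \<Rightarrow>\<^sub>C real) set" where
    "S = {G. (\<forall>t. apply_bcontfun G t = apply_bcontfun G (clamp a b t))
             \<and> (\<forall>j\<in>C. apply_bcontfun G (z j) = w j)}"
  define T where "T G = Bcontfun (\<Phi> (apply_bcontfun G) \<circ> clamp a b)" for G
  have extend: "apply_bcontfun (Bcontfun (g \<circ> clamp a b)) = g \<circ> clamp a b"
    if "continuous_on {a..b} g" for g
    using comp_clamp_bcontfun[OF ab that] by (simp add: Bcontfun_inverse)
  have extend_S: "Bcontfun (g \<circ> clamp a b) \<in> S"
    if "continuous_on {a..b} g" "\<forall>j\<in>C. g (z j) = w j" for g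
    using that nodes clamp_in[OF ab] by (auto simp: S_def extend clamp_id image_subset_iff)
  have S_admissible: "continuous_on {a..b} (apply_bcontfun G)" "\<forall>j\<in>C. G (z j) = w j"
    if "G \<in> S" for G
    using that by (auto simp: S_def)
  have T_S: "T G \<in> S" if "G \<in> S" for G
    using maps[OF S_admissible[OF that]] by (simp add: T_def extend_S)
  have T_apply: "apply_bcontfun (T G) t = \<Phi> G (clamp a b t)" if "G \<in> S" for G t
    using maps[OF S_admissible[OF that]] by (simp add: T_def extend)
  have T_contraction: "dist (T G) (T H) \<le> max 0 K * dist G H" if "G \<in> S" "H \<in> S" for G H
  proof (rule dist_bound)
    fix t
    have "\<forall>u\<in>{a..b}. \<bar>G u - H u\<bar> \<le> dist G H"
      using dist_bounded[where f=G and g=H] by (simp add: dist_real_def)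
    then have "\<bar>\<Phi> G (clamp a b t) - \<Phi> H (clamp a b t)\<bar> \<le> K * dist G H"
      by (rule contraction[OF _ clamp_in[OF ab]])
    also have "\<dots> \<le> max 0 K * dist G H"
      by (intro mult_right_mono) auto
    finally show "dist (T G t) (T H t) \<le> max 0 K * dist G H"
      using that by (simp add: T_apply dist_real_def)
  qed
  have "closed S"
    unfolding S_def by (rule closed_clamped_bcontfun_interpolating)
  moreover have "S \<noteq> {}"
    using extend_S[OF start] by blast
  ultimately obtain F where F: "F \<in> S" "T F = F"
    using K1 T_S Banach_fix[OF _ _ _ _ _ T_contraction, of S] by (auto simp: complete_eq_closed)
  have "\<Phi> F t = F t" if "t \<in> {a..b}" for t
    using T_apply[OF F(1), of t] F(2) clamp_id[OF that] by simp
  then show ?thesis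
    using S_admissible[OF F(1)] by blast
qed

locale knots =
  fixes x :: "nat \<Rightarrow> real" and n :: nat
  assumes knots_increasing: "\<And>i. i < n \<Longrightarrow> x i < x (Suc i)"
begin

abbreviation seg :: "nat \<Rightarrow> real set" where
  "seg i \<equiv> {x (i - 1)..x i}"

lemma knots_less: "i < j \<Longrightarrow> j \<le> n \<Longrightarrow> x i < x j"
proof (induction j)
  case (Suc j)
  then show ?case
    using knots_increasing[of j] by (cases "i = j") auto
qed simp

lemma knots_le: "i \<le> j \<Longrightarrow> j \<le> n \<Longrightarrow> x i \<le> x j"
  using knots_less[of i j] by (cases "i = j") auto

lemma knots_le_iff: "i \<le> n \<Longrightarrow> j \<le> n \<Longrightarrow> x i \<le> x j \<longleftrightarrow> i \<le> j"
  using knots_less[of j i] knots_le[of i j] by force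

lemma seg_subset: "i \<in> {1..n} \<Longrightarrow> seg i \<subseteq> {x 0..x n}"
  using knots_le[of 0 "i - 1"] knots_le[of i n] by auto

lemma Union_segs: "k < m \<Longrightarrow> m \<le> n \<Longrightarrow> (\<Union>i\<in>{Suc k..m}. seg i) = {x k..x m}"
proof (induction m)
  case (Suc m)
  show ?case
  proof (cases "k = m")
    case False
    then have "(\<Union>i\<in>{Suc k..Suc m}. seg i) = {x m..x (Suc m)} \<union> {x k..x m}"
      using Suc by (auto simp: atLeastAtMostSuc_conv)
    also have "\<dots> = {x k..x (Suc m)}"
      using knots_le[of k m] knots_le[of m "Suc m"] False Suc.prems by auto
    finally show ?thesis .
  qed simp
qed simp

lemma Union_segs_within:
  assumes "k < m" "m \<le> n"
  shows "(\<Union>j\<in>{j\<in>{1..n}. seg j \<subseteq> {x k..x m}}. seg j) = {x k..x m}"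
proof
  have "{Suc k..m} \<subseteq> {j\<in>{1..n}. seg j \<subseteq> {x k..x m}}"
    using assms knots_le by auto
  then show "{x k..x m} \<subseteq> (\<Union>j\<in>{j\<in>{1..n}. seg j \<subseteq> {x k..x m}}. seg j)"
    using Union_segs[OF assms] by blast
qed blast

lemma segs_overlap:
  assumes "i \<in> {1..n}" "j \<in> {1..n}" "i < j" "t \<in> seg i" "t \<in> seg j"
  shows "j = Suc i \<and> t = x i"
proof -
  have "j - 1 \<le> i"
    using knots_le_iff[of "j - 1" i] assms by auto
  moreover have "x i \<le> x (j - 1)"
    using knots_le[of i "j - 1"] assms by auto
  ultimately show ?thesis
    using assms by auto
qed

definition seg_index :: "real \<Rightarrow> nat" where
  "seg_index t = (SOME i. i \<in> {1..n} \<and> t \<in> seg i)"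

definition glue :: "(nat \<Rightarrow> real \<Rightarrow> 'a) \<Rightarrow> real \<Rightarrow> 'a" where
  "glue \<Psi> t = \<Psi> (seg_index t) t"

lemma seg_index:
  assumes "1 \<le> n" "t \<in> {x 0..x n}"
  shows "seg_index t \<in> {1..n}" "t \<in> seg (seg_index t)"
proof -
  have "t \<in> (\<Union>i\<in>{1..n}. seg i)"
    using Union_segs[of 0 n] assms by simp
  then have "\<exists>i. i \<in> {1..n} \<and> t \<in> seg i"
    by blast
  then show "seg_index t \<in> {1..n}" "t \<in> seg (seg_index t)"
    unfolding seg_index_def by (metis (mono_tags, lifting) someI_ex)+
qed

text \<open>At a knot shared by two segments the choice made by seg_index is arbitrary; pieces with
  matching values at the knots make the choice irrelevant.\<close>
lemma glue_eq:
  assumes n: "1 \<le> n"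
    and ends: "\<And>i. i \<in> {1..n} \<Longrightarrow> \<Psi> i (x (i - 1)) = v (i - 1) \<and> \<Psi> i (x i) = v i"
    and i: "i \<in> {1..n}" and t: "t \<in> seg i"
  shows "glue \<Psi> t = \<Psi> i t"
proof -
  define k where "k = seg_index t"
  have k: "k \<in> {1..n}" "t \<in> seg k"
    using seg_index[OF n] seg_subset[OF i] t by (auto simp: k_def)
  have "\<Psi> k t = \<Psi> i t"
  proof (cases k i rule: linorder_cases)
    case less
    then show ?thesis
      using segs_overlap[OF k(1) i less k(2) t] ends[OF k(1)] ends[OF i] by auto
  next
    case greater
    then show ?thesis
      using segs_overlap[OF i k(1) greater t k(2)] ends[OF k(1)] ends[OF i] by auto
  qed simp
  then show ?thesis
    by (simp add: glue_def k_def)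
qed

lemma continuous_on_glue:
  assumes n: "1 \<le> n"
    and ends: "\<And>i. i \<in> {1..n} \<Longrightarrow> \<Psi> i (x (i - 1)) = v (i - 1) \<and> \<Psi> i (x i) = v i"
    and cont: "\<And>i. i \<in> {1..n} \<Longrightarrow> continuous_on (seg i) (\<Psi> i)"
  shows "continuous_on {x 0..x n} (glue \<Psi>)"
proof -
  have "continuous_on (\<Union>i\<in>{1..n}. seg i) (glue \<Psi>)"
  proof (rule continuous_on_closed_Union)
    show "continuous_on (seg i) (glue \<Psi>)" if "i \<in> {1..n}" for i
    proof (rule continuous_on_eq[OF cont[OF that]])
      show "\<Psi> i t = glue \<Psi> t" if "t \<in> seg i" for t
        using glue_eq[of \<Psi> v i t] n ends \<open>i \<in> {1..n}\<close> that by simp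
    qed
  qed auto
  then show ?thesis
    using Union_segs[of 0 n] n by simp
qed

lemma knot_in_seg:
  assumes "1 \<le> n" "j \<le> n"
  obtains i where "i \<in> {1..n}" "j \<in> {i - 1, i}" "x j \<in> seg i"
proof (cases "j = 0")
  case True
  then show ?thesis
    using that[of 1] assms knots_le[of 0 1] by auto
next
  case False
  then show ?thesis
    using that[of j] assms knots_le[of "j - 1" j] by auto
qed

lemma glue_at_knot:
  assumes n: "1 \<le> n"
    and ends: "\<And>i. i \<in> {1..n} \<Longrightarrow> \<Psi> i (x (i - 1)) = v (i - 1) \<and> \<Psi> i (x i) = v i"
    and j: "j \<le> n"
  shows "glue \<Psi> (x j) = v j"
proof -
  obtain i where i: "i \<in> {1..n}" "j \<in> {i - 1, i}" "x j \<in> seg i"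
    using knot_in_seg[OF n j] .
  then show ?thesis
    using glue_eq[of \<Psi> v i "x j"] n ends by auto
qed

lemma continuous_interpolant_exists:
  fixes v :: "nat \<Rightarrow> real"
  assumes n: "1 \<le> n"
  shows "\<exists>g. continuous_on {x 0..x n} g \<and> (\<forall>j\<in>{0..n}. g (x j) = v j)"
proof -
  define lin where
    "lin i t = v (i - 1) + (v i - v (i - 1)) * (t - x (i - 1)) / (x i - x (i - 1))" for i t
  have gap: "x (i - 1) < x i" if "i \<in> {1..n}" for i
    using knots_less[of "i - 1" i] that by auto
  have ends: "lin i (x (i - 1)) = v (i - 1) \<and> lin i (x i) = v i" if "i \<in> {1..n}" for i
    using gap[OF that] by (simp add: lin_def)
  have "continuous_on (seg i) (lin i)" if "i \<in> {1..n}" for i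
    using gap[OF that] unfolding lin_def by (intro continuous_intros) auto
  then show ?thesis
    using continuous_on_glue[OF n ends] glue_at_knot[OF n ends] by auto
qed

end

text \<open>The domain of L_i is the union of the segments from knot lo i to knot hi i; in the
  notation of the paper lo i = s(\<gamma>(i)) and hi i = e(\<gamma>(i)).\<close>
locale fractal_interpolation = knots x n
  for x :: "nat \<Rightarrow> real" and n :: nat +
  fixes y :: "nat \<Rightarrow> real" and lo hi :: "nat \<Rightarrow> nat"
    and L :: "nat \<Rightarrow> real \<Rightarrow> real" and a :: "real \<Rightarrow> real" and La :: real
    and b s :: "nat \<Rightarrow> real \<Rightarrow> real"
  assumes n_pos: "1 \<le> n"
    and dom_knots: "\<And>i. i \<in> {1..n} \<Longrightarrow> lo i < hi i \<and> hi i \<le> n"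
    and L_homeo: "\<And>i. i \<in> {1..n} \<Longrightarrow>
        \<exists>g. homeomorphism {x (lo i)..x (hi i)} {x (i - 1)..x i} (L i) g"
    and L_ends: "\<And>i. i \<in> {1..n} \<Longrightarrow> L i ` {x (lo i), x (hi i)} = {x (i - 1), x i}"
    and a_lip: "La-lipschitz_on UNIV a"
    and b_cont: "\<And>i. i \<in> {1..n} \<Longrightarrow> continuous_on {x (lo i)..x (hi i)} (b i)"
    and s_cont: "\<And>i. i \<in> {1..n} \<Longrightarrow> continuous_on {x (i - 1)..x i} (s i)"
    and s_sup: "\<And>i. i \<in> {1..n} \<Longrightarrow> (SUP t\<in>{x (i - 1)..x i}. \<bar>s i t\<bar>) * La < 1"
    and interp: "\<And>i \<alpha> \<beta>. i \<in> {1..n} \<Longrightarrow> \<alpha> \<in> {lo i, hi i} \<Longrightarrow> \<beta> \<in> {i - 1, i} \<Longrightarrow>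
        L i (x \<alpha>) = x \<beta> \<Longrightarrow> Fmap s L a b i (x \<alpha>) (y \<alpha>) = y \<beta>"
begin

abbreviation src :: "nat \<Rightarrow> real set" where
  "src i \<equiv> {x (lo i)..x (hi i)}"

definition Linv :: "nat \<Rightarrow> real \<Rightarrow> real" where
  "Linv i = inv_into (src i) (L i)"

definition piece :: "(real \<Rightarrow> real) \<Rightarrow> nat \<Rightarrow> real \<Rightarrow> real" where
  "piece g i t = Fmap s L a b i (Linv i t) (g (Linv i t))"

definition rb :: "(real \<Rightarrow> real) \<Rightarrow> real \<Rightarrow> real" where
  "rb g = glue (piece g)"

lemma L_homeomorphism:
  assumes "i \<in> {1..n}"
  shows "homeomorphism (src i) (seg i) (L i) (Linv i)"
proof -
  obtain g where "homeomorphism (src i) (seg i) (L i) g"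
    using L_homeo[OF assms] by blast
  then show ?thesis
    unfolding Linv_def by (rule homeomorphism_inv_into)
qed

lemma src_subset: "i \<in> {1..n} \<Longrightarrow> src i \<subseteq> {x 0..x n}"
  using knots_le[of 0 "lo i"] knots_le[of "hi i" n] dom_knots[of i] by auto

lemma Linv_in:
  assumes "i \<in> {1..n}" and "t \<in> seg i"
  shows "Linv i t \<in> {x 0..x n}"
  using homeomorphism_image2[OF L_homeomorphism[OF assms(1)]] src_subset[OF assms(1)] assms(2)
  by blast

lemma piece_at_knot:
  assumes g: "\<forall>j\<in>{0..n}. g (x j) = y j" and i: "i \<in> {1..n}" and \<beta>: "\<beta> \<in> {i - 1, i}"
  shows "piece g i (x \<beta>) = y \<beta>"
proof -
  have "x \<beta> \<in> {x (i - 1), x i}"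
    using \<beta> by blast
  then have "x \<beta> \<in> L i ` {x (lo i), x (hi i)}"
    by (simp only: L_ends[OF i])
  then obtain u where u: "u \<in> {x (lo i), x (hi i)}" "L i u = x \<beta>"
    by (metis imageE)
  obtain \<alpha> where \<alpha>: "\<alpha> \<in> {lo i, hi i}" "L i (x \<alpha>) = x \<beta>"
  proof (cases "u = x (lo i)")
    case True
    then show ?thesis
      using that[of "lo i"] u(2) by simp
  next
    case False
    then show ?thesis
      using that[of "hi i"] u by simp
  qed
  have "x \<alpha> \<in> src i"
    using \<alpha>(1) knots_le[of "lo i" "hi i"] dom_knots[OF i] by auto
  then have "Linv i (L i (x \<alpha>)) = x \<alpha>"
    by (rule homeomorphism_apply1[OF L_homeomorphism[OF i]])
  moreover have "g (x \<alpha>) = y \<alpha>"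
    using g \<alpha>(1) dom_knots[OF i] by auto
  ultimately show ?thesis
    using interp[OF i \<alpha>(1) \<beta> \<alpha>(2)] \<alpha>(2) by (simp add: piece_def)
qed

lemma piece_ends:
  assumes "\<forall>j\<in>{0..n}. g (x j) = y j" and "i \<in> {1..n}"
  shows "piece g i (x (i - 1)) = y (i - 1) \<and> piece g i (x i) = y i"
  using piece_at_knot[OF assms] by simp

lemma continuous_on_piece:
  assumes g: "continuous_on {x 0..x n} g" and i: "i \<in> {1..n}"
  shows "continuous_on (seg i) (piece g i)"
proof -
  note hom = L_homeomorphism[OF i]
  have Linv_src: "Linv i ` seg i \<subseteq> src i"
    using homeomorphism_image2[OF hom] by simp
  have "continuous_on (seg i) (\<lambda>t. s i t * a (g (Linv i t)) + b i (Linv i t))"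
    using Linv_src src_subset[OF i]
    by (intro continuous_intros s_cont i continuous_on_compose2[OF b_cont[OF i]]
        continuous_on_compose2[OF lipschitz_on_continuous_on[OF a_lip]]
        continuous_on_compose2[OF g] homeomorphism_cont2[OF hom]) auto
  then show ?thesis
    by (rule continuous_on_eq) (simp add: piece_def Fmap_def homeomorphism_apply2[OF hom])
qed

lemma rb_eq:
  assumes "\<forall>j\<in>{0..n}. g (x j) = y j" and "i \<in> {1..n}" and "t \<in> seg i"
  shows "rb g t = piece g i t"
  unfolding rb_def
  by (rule glue_eq[where v=y, OF n_pos piece_ends[OF assms(1)] assms(2,3)])

lemma rb_at_knot:
  assumes "\<forall>j\<in>{0..n}. g (x j) = y j" and "j \<le> n"
  shows "rb g (x j) = y j"
  unfolding rb_def
  by (rule glue_at_knot[where v=y, OF n_pos piece_ends[OF assms(1)] assms(2)])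

lemma continuous_on_rb:
  assumes "continuous_on {x 0..x n} g" and "\<forall>j\<in>{0..n}. g (x j) = y j"
  shows "continuous_on {x 0..x n} (rb g)"
  unfolding rb_def
  by (rule continuous_on_glue[where v=y, OF n_pos piece_ends[OF assms(2)]
        continuous_on_piece[OF assms(1)]])

definition contraction_factor :: real where
  "contraction_factor = Max ((\<lambda>i. (SUP t\<in>seg i. \<bar>s i t\<bar>) * La) ` {1..n})"

lemma contraction_factor_less_1: "contraction_factor < 1"
proof -
  have "contraction_factor \<in> (\<lambda>i. (SUP t\<in>seg i. \<bar>s i t\<bar>) * La) ` {1..n}"
    unfolding contraction_factor_def using n_pos by (intro Max_in) auto
  then show ?thesis
    using s_sup by auto
qed

lemma rb_contraction:
  assumes B: "\<forall>u\<in>{x 0..x n}. \<bar>g u - h u\<bar> \<le> B" and t: "t \<in> {x 0..x n}"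
  shows "\<bar>rb g t - rb h t\<bar> \<le> contraction_factor * B"
proof -
  define i where "i = seg_index t"
  define u where "u = Linv i t"
  define M where "M = (SUP t\<in>seg i. \<bar>s i t\<bar>)"
  have i: "i \<in> {1..n}" "t \<in> seg i"
    using seg_index[OF n_pos t] by (auto simp: i_def)
  have u: "u \<in> {x 0..x n}"
    using Linv_in[OF i] by (simp add: u_def)
  have "bdd_above ((\<lambda>t. \<bar>s i t\<bar>) ` seg i)"
    using s_cont[OF i(1)] by (intro bounded_imp_bdd_above compact_imp_bounded
        compact_continuous_image continuous_intros compact_Icc)
  then have s_le: "\<bar>s i t\<bar> \<le> M"
    unfolding M_def using i(2) by (rule cSUP_upper2) simp
  have La: "0 \<le> La"
    using a_lip by (rule lipschitz_on_nonneg)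
  have "\<bar>a (g u) - a (h u)\<bar> \<le> La * \<bar>g u - h u\<bar>"
    using lipschitz_onD[OF a_lip] by (simp add: dist_real_def)
  also have "\<dots> \<le> La * B"
    using B u La by (simp add: mult_left_mono)
  finally have a_le: "\<bar>a (g u) - a (h u)\<bar> \<le> La * B" .
  have "\<bar>rb g t - rb h t\<bar> = \<bar>s i t\<bar> * \<bar>a (g u) - a (h u)\<bar>"
    using homeomorphism_apply2[OF L_homeomorphism[OF i(1)] i(2)]
    by (simp add: rb_def glue_def piece_def Fmap_def u_def flip: i_def abs_mult right_diff_distrib)
  also have "\<dots> \<le> M * (La * B)"
    using s_le a_le by (intro mult_mono) auto
  also have "\<dots> \<le> contraction_factor * B"
  proof -
    have "M * La \<le> contraction_factor"
      unfolding contraction_factor_def M_def using i(1) by (intro Max_ge) auto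
    moreover have "0 \<le> B"
      using B u by force
    ultimately show ?thesis
      by (simp add: mult.assoc[symmetric] mult_right_mono)
  qed
  finally show ?thesis .
qed

lemma rb_fixpoint_iff:
  assumes g: "\<forall>j\<in>{0..n}. g (x j) = y j"
  shows "(\<forall>t\<in>{x 0..x n}. rb g t = g t) \<longleftrightarrow> (\<forall>i\<in>{1..n}. \<forall>t\<in>seg i. g t = piece g i t)"
proof
  assume fixed: "\<forall>t\<in>{x 0..x n}. rb g t = g t"
  show "\<forall>i\<in>{1..n}. \<forall>t\<in>seg i. g t = piece g i t"
  proof (intro ballI)
    fix i t assume i: "i \<in> {1..n}" and t: "t \<in> seg i"
    then show "g t = piece g i t"
      using fixed rb_eq[OF g i t] seg_subset[OF i] by auto
  qed
next
  assume eq: "\<forall>i\<in>{1..n}. \<forall>t\<in>seg i. g t = piece g i t"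
  show "\<forall>t\<in>{x 0..x n}. rb g t = g t"
  proof
    fix t assume "t \<in> {x 0..x n}"
    then show "rb g t = g t"
      using rb_eq[OF g seg_index[OF n_pos]] eq seg_index[OF n_pos] by metis
  qed
qed

theorem fractal_interpolant:
  "\<exists>f. continuous_on {x 0..x n} f \<and> (\<forall>j\<in>{0..n}. f (x j) = y j)
     \<and> (\<forall>i\<in>{1..n}. \<forall>t\<in>seg i. f t = piece f i t)
     \<and> (\<forall>g. continuous_on {x 0..x n} g \<and> (\<forall>j\<in>{0..n}. g (x j) = y j)
            \<and> (\<forall>i\<in>{1..n}. \<forall>t\<in>seg i. g t = piece g i t)
          \<longrightarrow> (\<forall>t\<in>{x 0..x n}. g t = f t))"
proof -
  have ends: "x 0 \<le> x n"
    using knots_le by simp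
  have nodes: "x ` {0..n} \<subseteq> {x 0..x n}"
    using knots_le by auto
  obtain g0 where g0: "continuous_on {x 0..x n} g0" "\<forall>j\<in>{0..n}. g0 (x j) = y j"
    using continuous_interpolant_exists[OF n_pos] by blast
  have maps: "continuous_on {x 0..x n} (rb g) \<and> (\<forall>j\<in>{0..n}. rb g (x j) = y j)"
    if "continuous_on {x 0..x n} g" "\<forall>j\<in>{0..n}. g (x j) = y j" for g
    using that continuous_on_rb rb_at_knot by simp
  obtain f where f: "continuous_on {x 0..x n} f" "\<forall>j\<in>{0..n}. f (x j) = y j"
      "\<forall>t\<in>{x 0..x n}. rb f t = f t"
    using contraction_fixpoint_exists_on_interval[where \<Phi>=rb, OF ends nodes g0 maps
        rb_contraction contraction_factor_less_1] by blast
  show ?thesis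
  proof (intro exI conjI allI impI)
    show "\<forall>i\<in>{1..n}. \<forall>t\<in>seg i. f t = piece f i t"
      using f(3) rb_fixpoint_iff[OF f(2)] by blast
    show "\<forall>t\<in>{x 0..x n}. g t = f t"
      if "continuous_on {x 0..x n} g \<and> (\<forall>j\<in>{0..n}. g (x j) = y j)
        \<and> (\<forall>i\<in>{1..n}. \<forall>t\<in>seg i. g t = piece g i t)" for g
    proof (rule contraction_fixpoint_unique_on_interval[where \<Phi>=rb, OF ends f(1) _ f(3) _
          rb_contraction contraction_factor_less_1])
      show "continuous_on {x 0..x n} g"
        using that by blast
      show "\<forall>t\<in>{x 0..x n}. rb g t = g t"
        using that rb_fixpoint_iff[of g] by blast
    qed
  qed (use f in auto)
qed

lemma graph_seg_self_affine:
  assumes f: "\<forall>i\<in>{1..n}. \<forall>t\<in>seg i. f t = piece f i t" and i: "i \<in> {1..n}"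
  shows "(\<lambda>t. (t, f t)) ` seg i
    = (\<Union>j\<in>{j\<in>{1..n}. seg j \<subseteq> src i}. Wmap s L a b i ` (\<lambda>t. (t, f t)) ` seg j)"
proof -
  note hom = L_homeomorphism[OF i]
  have "(\<Union>j\<in>{j\<in>{1..n}. seg j \<subseteq> src i}. seg j) = src i"
    using Union_segs_within dom_knots[OF i] by blast
  then have "(\<Union>j\<in>{j\<in>{1..n}. seg j \<subseteq> src i}. Wmap s L a b i ` (\<lambda>t. (t, f t)) ` seg j)
      = (\<lambda>u. Wmap s L a b i (u, f u)) ` src i"
    by blast
  also have "\<dots> = (\<lambda>u. (L i u, f (L i u))) ` src i"
  proof (rule image_cong[OF refl])
    fix u assume u: "u \<in> src i"
    have "L i u \<in> seg i"
      using homeomorphism_image1[OF hom] u by blast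
    then show "Wmap s L a b i (u, f u) = (L i u, f (L i u))"
      using f i homeomorphism_apply1[OF hom u] by (simp add: Wmap_def piece_def)
  qed
  also have "\<dots> = (\<lambda>t. (t, f t)) ` L i ` src i"
    by (simp add: image_image)
  also have "\<dots> = (\<lambda>t. (t, f t)) ` seg i"
    using homeomorphism_image1[OF hom] by simp
  finally show ?thesis ..
qed

end

theorem theorem1:
  fixes n l :: nat
    and x y :: "nat \<Rightarrow> real"
    and st en :: "nat \<Rightarrow> nat"
    and \<gamma> :: "nat \<Rightarrow> nat"
    and L :: "nat \<Rightarrow> real \<Rightarrow> real"
    and a :: "real \<Rightarrow> real" and La :: real
    and b s :: "nat \<Rightarrow> real \<Rightarrow> real"
  assumes n2: "n \<ge> 2"
    and x_mono: "\<And>i. i < n \<Longrightarrow> x i < x (Suc i)"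
    and l2: "l \<ge> 2"
    and se: "\<And>k. k \<in> {1..l} \<Longrightarrow> en k \<le> n \<and> st k + 2 \<le> en k"
    and gam: "\<And>i. i \<in> {1..n} \<Longrightarrow> \<gamma> i \<in> {1..l}"
    and L_homeo: "\<And>i. i \<in> {1..n} \<Longrightarrow>
        \<exists>g. homeomorphism {x (st (\<gamma> i))..x (en (\<gamma> i))} {x (i - 1)..x i} (L i) g"
    and L_contr: "\<And>i. i \<in> {1..n} \<Longrightarrow>
        \<exists>c<1. c-lipschitz_on {x (st (\<gamma> i))..x (en (\<gamma> i))} (L i)"
    and L_end: "\<And>i. i \<in> {1..n} \<Longrightarrow>
        L i ` {x (st (\<gamma> i)), x (en (\<gamma> i))} = {x (i - 1), x i}"
    and a_lip: "La-lipschitz_on UNIV a"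
    and b_lip: "\<And>i. i \<in> {1..n} \<Longrightarrow>
        \<exists>C. C-lipschitz_on {x (st (\<gamma> i))..x (en (\<gamma> i))} (b i)"
    and s_lip: "\<And>i. i \<in> {1..n} \<Longrightarrow> \<exists>c<1. c-lipschitz_on {x (i - 1)..x i} (s i)"
    and s_sup: "\<And>i. i \<in> {1..n} \<Longrightarrow> (SUP t\<in>{x (i - 1)..x i}. \<bar>s i t\<bar>) * La < 1"
    and interp: "\<And>i \<alpha> \<beta>. i \<in> {1..n} \<Longrightarrow> \<alpha> \<in> {st (\<gamma> i), en (\<gamma> i)} \<Longrightarrow>
        \<beta> \<in> {i - 1, i} \<Longrightarrow> L i (x \<alpha>) = x \<beta> \<Longrightarrow> Fmap s L a b i (x \<alpha>) (y \<alpha>) = y \<beta>"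
  shows "\<exists>f. (continuous_on {x 0..x n} f
            \<and> (\<forall>i\<in>{0..n}. f (x i) = y i)
            \<and> (\<forall>i\<in>{1..n}. \<forall>t\<in>{x (i - 1)..x i}.
                 f t = Fmap s L a b i (inv_into {x (st (\<gamma> i))..x (en (\<gamma> i))} (L i) t)
                         (f (inv_into {x (st (\<gamma> i))..x (en (\<gamma> i))} (L i) t))))
         \<and> (\<forall>g. (continuous_on {x 0..x n} g
                  \<and> (\<forall>i\<in>{0..n}. g (x i) = y i)
                  \<and> (\<forall>i\<in>{1..n}. \<forall>t\<in>{x (i - 1)..x i}.
                       g t = Fmap s L a b i (inv_into {x (st (\<gamma> i))..x (en (\<gamma> i))} (L i) t)
                               (g (inv_into {x (st (\<gamma> i))..x (en (\<gamma> i))} (L i) t))))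
                \<longrightarrow> (\<forall>t\<in>{x 0..x n}. g t = f t))
         \<and> (\<forall>i\<in>{1..n}. (\<lambda>t. (t, f t)) ` {x (i - 1)..x i} =
              (\<Union>j\<in>{j\<in>{1..n}. {x (j - 1)..x j} \<subseteq> {x (st (\<gamma> i))..x (en (\<gamma> i))}}.
                 Wmap s L a b i ` ((\<lambda>t. (t, f t)) ` {x (j - 1)..x j})))
         \<and> (\<Union>i\<in>{1..n}. (\<lambda>t. (t, f t)) ` {x (i - 1)..x i}) = (\<lambda>t. (t, f t)) ` {x 0..x n}"
proof -
  interpret fractal_interpolation x n y "\<lambda>i. st (\<gamma> i)" "\<lambda>i. en (\<gamma> i)" L a La b s
  proof unfold_locales
    show "1 \<le> n"
      using n2 by simp
    show "\<And>i. i \<in> {1..n} \<Longrightarrow> st (\<gamma> i) < en (\<gamma> i) \<and> en (\<gamma> i) \<le> n"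
      using se gam by fastforce
    show "\<And>i. i \<in> {1..n} \<Longrightarrow> continuous_on {x (st (\<gamma> i))..x (en (\<gamma> i))} (b i)"
      using b_lip lipschitz_on_continuous_on by blast
    show "\<And>i. i \<in> {1..n} \<Longrightarrow> continuous_on {x (i - 1)..x i} (s i)"
      using s_lip lipschitz_on_continuous_on by blast
  qed (fact x_mono L_homeo L_end a_lip s_sup interp)+
  obtain f where f: "continuous_on {x 0..x n} f" "\<forall>j\<in>{0..n}. f (x j) = y j"
      "\<forall>i\<in>{1..n}. \<forall>t\<in>seg i. f t = piece f i t"
    and unique: "\<forall>g. continuous_on {x 0..x n} g \<and> (\<forall>j\<in>{0..n}. g (x j) = y j)
            \<and> (\<forall>i\<in>{1..n}. \<forall>t\<in>seg i. g t = piece g i t) \<longrightarrow> (\<forall>t\<in>{x 0..x n}. g t = f t)"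
    using fractal_interpolant by blast
  have graph_union: "(\<Union>i\<in>{1..n}. (\<lambda>t. (t, f t)) ` seg i) = (\<lambda>t. (t, f t)) ` {x 0..x n}"
    using Union_segs[of 0 n] n2 by (simp add: image_UN[symmetric])
  have self_affine: "\<forall>i\<in>{1..n}. (\<lambda>t. (t, f t)) ` seg i
      = (\<Union>j\<in>{j\<in>{1..n}. seg j \<subseteq> src i}. Wmap s L a b i ` (\<lambda>t. (t, f t)) ` seg j)"
    using graph_seg_self_affine[OF f(3)] by blast
  show ?thesis
  proof (intro exI[of _ f] conjI)
  qed (use f unique self_affine graph_union in \<open>simp_all only: piece_def Linv_def\<close>)
qed

end
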